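(* Let $X$ be a reflexive real Banach space, $Y$ a real Banach space, $\Omega$ a measure space, $Z:=L^2(\Omega)$, and $e:Y\to Z$ a linear continuous dense embedding. Let $f:X\to\mathbb{R}$ and $g:X\to Y$ be such that $f$ and $x\mapsto\|g_+(x)\|_Z$ are weakly lower semicontinuous, $g$ is convex (with respect to the order of $Y$), $f$ is strongly convex, and the feasible set $\{x\in X: g(x)\le 0\}$ is nonempty. Let $(x^k)$ be generated by the augmented Lagrangian algorithm described in the context, where in Step 2 the iterate $x^{k+1}$ is chosen such that there is a sequence $\varepsilon_k\downarrow 0$ with $L_{\rho_k}(x^{k+1},w^k)\le L_{\rho_k}(x,w^k)+\varepsilon_k$ for all $x\in X$ and all $k$. Then the problem $\min f(x)$ s.t. $g(x)\le 0$ has a unique solution $\bar x$, and $x^k\to\bar x$ strongly in $X$.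
   Context: The order on $Y$ is induced by $Z$: $y\le 0$ in $Y$ means $e(y)\le 0$ a.e. on $\Omega$; $g$ convex means $g(tx+(1-t)x')\le t g(x)+(1-t)g(x')$ in this order for all $x,x'\in X$, $t\in[0,1]$. For $z\in Z$, $z_+:=\max\{z,0\}$ (pointwise); $g_+(x):=(e(g(x)))_+$, and $\min$ of elements of $Z$ is pointwise. The augmented Lagrangian is $L_\rho(x,\lambda):=f(x)+\frac{\rho}{2}\big\|\big(g(x)+\frac{\lambda}{\rho}\big)_+\big\|_Z^2$ for $x\in X$, $\lambda\in Z$, $\rho>0$. Algorithm: (S.0) Choose $(x^0,\lambda^0)\in X\times Z$, $\rho_0>0$, $w^{\max}\in Z$ with $w^{\max}\ge 0$, $\gamma>1$, $\tau\in(0,1)$; $k=0$. (S.2) Choose $w^k\in Z$ with $0\le w^k\le w^{\max}$ a.e. and compute an approximate minimizer $x^{k+1}$ of $L_{\rho_k}(\cdot,w^k)$. (S.3) Set $\lambda^{k+1}:=(w^k+\rho_k g(x^{k+1}))_+$. If $k=0$ or $\|\min\{-g(x^{k+1}),w^k/\rho_k\}\|_Z\le\tau\|\min\{-g(x^k),w^{k-1}/\rho_{k-1}\}\|_Z$, set $\rho_{k+1}:=\rho_k$; else $\rho_{k+1}:=\gamma\rho_k$. (S.4) $k\leftarrow k+1$, go to (S.2). The algorithm is run without stopping. *)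

theory Defs
  imports "HOL-Analysis.Analysis"
begin

definition reflexive_space :: "'x::real_normed_vector itself \<Rightarrow> bool" where
  "reflexive_space _ \<longleftrightarrow>
     (\<forall>\<Phi> :: ('x \<Rightarrow>\<^sub>L real) \<Rightarrow>\<^sub>L real. \<exists>x::'x. \<forall>\<phi>. blinfun_apply \<Phi> \<phi> = blinfun_apply \<phi> x)"

text \<open>Lower semicontinuity with respect to the weak topology of X, written with the
  basic weak neighbourhoods  {y. \<forall>\<phi>\<in>\<Phi>. |\<phi> y - \<phi> x| < \<epsilon>}, \<Phi> a finite set of
  bounded linear functionals.\<close>
definition weakly_lsc :: "('x::real_normed_vector \<Rightarrow> real) \<Rightarrow> bool" where
  "weakly_lsc F \<longleftrightarrow>
     (\<forall>x c. c < F x \<longrightarrow>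
        (\<exists>\<Phi> :: ('x \<Rightarrow>\<^sub>L real) set. \<exists>\<epsilon>>0. finite \<Phi> \<and>
           (\<forall>y. (\<forall>\<phi>\<in>\<Phi>. \<bar>blinfun_apply \<phi> y - blinfun_apply \<phi> x\<bar> < \<epsilon>) \<longrightarrow> c < F y)))"

definition strongly_convex :: "('x::real_normed_vector \<Rightarrow> real) \<Rightarrow> bool" where
  "strongly_convex f \<longleftrightarrow>
     (\<exists>\<mu>>0. \<forall>x x' t. 0 \<le> t \<and> t \<le> 1 \<longrightarrow>
        f (t *\<^sub>R x + (1 - t) *\<^sub>R x')
          \<le> t * f x + (1 - t) * f x' - \<mu> / 2 * t * (1 - t) * (norm (x - x'))\<^sup>2)"

text \<open>Elements of Z are represented by square-integrable measurable functions;
  equalities/inequalities in Z are meant almost everywhere.\<close>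
definition L2 :: "'w measure \<Rightarrow> ('w \<Rightarrow> real) set" where
  "L2 M = {z. z \<in> borel_measurable M \<and> integrable M (\<lambda>w. (z w)\<^sup>2)}"

definition L2norm :: "'w measure \<Rightarrow> ('w \<Rightarrow> real) \<Rightarrow> real" where
  "L2norm M z = sqrt (integral\<^sup>L M (\<lambda>w. (z w)\<^sup>2))"

definition dense_L2_embedding :: "'w measure \<Rightarrow> ('y::real_normed_vector \<Rightarrow> 'w \<Rightarrow> real) \<Rightarrow> bool" where
  "dense_L2_embedding M e \<longleftrightarrow>
     (\<forall>y. e y \<in> L2 M) \<and>
     (\<forall>a b y y'. AE w in M. e (a *\<^sub>R y + b *\<^sub>R y') w = a * e y w + b * e y' w) \<and>
     (\<exists>C. \<forall>y. L2norm M (e y) \<le> C * norm y) \<and>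
     (\<forall>y. (AE w in M. e y w = 0) \<longrightarrow> y = 0) \<and>
     (\<forall>z\<in>L2 M. \<forall>\<epsilon>>0. \<exists>y. L2norm M (\<lambda>w. e y w - z w) < \<epsilon>)"

text \<open>Convexity of g : X \<rightarrow> Y with respect to the order on Y induced by e.\<close>
definition order_convex :: "'w measure \<Rightarrow> ('y \<Rightarrow> 'w \<Rightarrow> real) \<Rightarrow> ('x::real_vector \<Rightarrow> 'y::real_vector) \<Rightarrow> bool" where
  "order_convex M e g \<longleftrightarrow>
     (\<forall>x x' t. 0 \<le> t \<and> t \<le> 1 \<longrightarrow>
        (AE w in M. e (g (t *\<^sub>R x + (1 - t) *\<^sub>R x') - (t *\<^sub>R g x + (1 - t) *\<^sub>R g x')) w \<le> 0))"

definition gplus :: "('y \<Rightarrow> 'w \<Rightarrow> real) \<Rightarrow> ('x \<Rightarrow> 'y) \<Rightarrow> 'x \<Rightarrow> 'w \<Rightarrow> real" where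
  "gplus e g x = (\<lambda>w. max (e (g x) w) 0)"

definition feasible :: "'w measure \<Rightarrow> ('y \<Rightarrow> 'w \<Rightarrow> real) \<Rightarrow> ('x \<Rightarrow> 'y) \<Rightarrow> 'x \<Rightarrow> bool" where
  "feasible M e g x \<longleftrightarrow> (AE w in M. e (g x) w \<le> 0)"

definition is_solution :: "'w measure \<Rightarrow> ('y \<Rightarrow> 'w \<Rightarrow> real) \<Rightarrow> ('x \<Rightarrow> real) \<Rightarrow> ('x \<Rightarrow> 'y) \<Rightarrow> 'x \<Rightarrow> bool" where
  "is_solution M e f g x \<longleftrightarrow> feasible M e g x \<and> (\<forall>x'. feasible M e g x' \<longrightarrow> f x \<le> f x')"

definition aug_lagr :: "'w measure \<Rightarrow> ('y \<Rightarrow> 'w \<Rightarrow> real) \<Rightarrow> ('x \<Rightarrow> real) \<Rightarrow> ('x \<Rightarrow> 'y)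
    \<Rightarrow> real \<Rightarrow> 'x \<Rightarrow> ('w \<Rightarrow> real) \<Rightarrow> real" where
  "aug_lagr M e f g \<rho> x lam =
     f x + \<rho> / 2 * (L2norm M (\<lambda>w. max (e (g x) w + lam w / \<rho>) 0))\<^sup>2"

definition compl_res :: "'w measure \<Rightarrow> ('y \<Rightarrow> 'w \<Rightarrow> real) \<Rightarrow> ('x \<Rightarrow> 'y) \<Rightarrow> 'x \<Rightarrow> ('w \<Rightarrow> real) \<Rightarrow> real \<Rightarrow> real" where
  "compl_res M e g x w \<rho> = L2norm M (\<lambda>s. min (- e (g x) s) (w s / \<rho>))"

end

theory Submission
  imports Defs
begin

(* Write G x = ||g_+(x)||; G is convex, nonnegative and lower semicontinuous, and the problem
   is to minimize f subject to G x = 0. Let l be the limit, as t -> 0+, of the relaxed values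
   inf {f x | G x <= t}. If G (z k) -> 0 and limsup f (z k) <= l, then the midpoints of z j
   and z k have vanishing violation too, so their f-values are at least l - o(1); strong
   convexity of f at these midpoints makes z a Cauchy sequence, and by lower semicontinuity its
   limit is feasible with value l. This yields a solution, its uniqueness (strong convexity
   again) and strong convergence to it of every such sequence.

   For the iterates, comparing x (k+1) with the solution xb in the approximate minimization of
   the augmented Lagrangian bounds f (x (k+1)) plus the shifted penalty of x (k+1) by f xb plus
   the shifted penalty of xb, which is O(1/rho k), plus eps k. If rho k -> oo this gives both
   G (x (k+1)) -> 0 and limsup f (x (k+1)) <= f xb. Otherwise rho is eventually constant, every
   residual test succeeds, the complementarity residual decays geometrically, and it dominates
   both G (x (k+1)) and the gap between the two penalty terms. *)

section \<open>Lower semicontinuity and strong convexity\<close>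

definition lower_semicontinuous :: "('a::topological_space \<Rightarrow> real) \<Rightarrow> bool" where
  "lower_semicontinuous F \<longleftrightarrow> (\<forall>c. open {x. c < F x})"

lemma weakly_lsc_imp_lower_semicontinuous:
  fixes F :: "'x::real_normed_vector \<Rightarrow> real"
  assumes "weakly_lsc F"
  shows "lower_semicontinuous F"
  unfolding lower_semicontinuous_def open_contains_ball
proof (intro allI ballI)
  fix c x0 assume "x0 \<in> {x. c < F x}"
  then obtain \<Phi> :: "('x \<Rightarrow>\<^sub>L real) set" and \<epsilon> where "finite \<Phi>" "\<epsilon> > 0"
    and nbhd: "\<forall>y. (\<forall>\<phi>\<in>\<Phi>. \<bar>\<phi> y - \<phi> x0\<bar> < \<epsilon>) \<longrightarrow> c < F y"
    using assms unfolding weakly_lsc_def by blast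
  define B where "B = (\<Sum>\<phi>\<in>\<Phi>. norm \<phi>) + 1"
  have "B > 0" unfolding B_def by (simp add: sum_nonneg add_nonneg_pos)
  have norm_less_B: "norm \<phi> < B" if "\<phi> \<in> \<Phi>" for \<phi>
    using member_le_sum[OF that _ \<open>finite \<Phi>\<close>, of norm] unfolding B_def by simp
  have "c < F y" if "dist x0 y < \<epsilon> / B" for y
  proof -
    have "\<bar>\<phi> y - \<phi> x0\<bar> < \<epsilon>" if "\<phi> \<in> \<Phi>" for \<phi>
    proof -
      have "\<bar>\<phi> y - \<phi> x0\<bar> = norm (\<phi> (y - x0))" by (simp add: blinfun.diff_right)
      also have "\<dots> \<le> norm \<phi> * norm (y - x0)" by (rule norm_blinfun)
      also have "\<dots> \<le> B * norm (y - x0)"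
        using norm_less_B[OF that] by (simp add: mult_right_mono)
      also have "\<dots> < \<epsilon>"
        using \<open>dist x0 y < \<epsilon> / B\<close> \<open>B > 0\<close>
        by (simp add: dist_norm norm_minus_commute pos_less_divide_eq mult.commute)
      finally show ?thesis .
    qed
    then show ?thesis using nbhd by blast
  qed
  then show "\<exists>r>0. ball x0 r \<subseteq> {x. c < F x}"
    using \<open>\<epsilon> > 0\<close> \<open>B > 0\<close> by (intro exI[of _ "\<epsilon> / B"]) auto
qed

lemma lower_semicontinuous_LIMSEQ_le:
  assumes "lower_semicontinuous F" "z \<longlonglongrightarrow> z0"
    and "\<And>\<delta>. \<delta> > 0 \<Longrightarrow> eventually (\<lambda>k. F (z k) \<le> c + \<delta>) sequentially"
  shows "F z0 \<le> c"
proof (rule ccontr)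
  assume "\<not> F z0 \<le> c"
  define \<delta> where "\<delta> = (F z0 - c) / 2"
  have "\<delta> > 0" using \<open>\<not> F z0 \<le> c\<close> by (simp add: \<delta>_def)
  have "c + \<delta> < F z0" using \<open>\<not> F z0 \<le> c\<close> by (simp add: \<delta>_def field_simps)
  have "open {x. c + \<delta> < F x}" using assms(1) unfolding lower_semicontinuous_def by blast
  then have "eventually (\<lambda>k. z k \<in> {x. c + \<delta> < F x}) sequentially"
    using topological_tendstoD[OF assms(2)] \<open>c + \<delta> < F z0\<close> by blast
  with assms(3)[OF \<open>\<delta> > 0\<close>] have "eventually (\<lambda>k. False) sequentially"
    by eventually_elim simp
  then show False by simp
qed

lemma strongly_convex_midpoint:
  assumes "strongly_convex f"
  obtains \<mu> where "\<mu> > 0"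
    and "\<And>x y. f (midpoint x y) \<le> f x / 2 + f y / 2 - \<mu> / 8 * (dist x y)\<^sup>2"
proof -
  obtain \<mu> where "\<mu> > 0" and sc: "\<And>x x' t. 0 \<le> t \<and> t \<le> 1 \<Longrightarrow> f (t *\<^sub>R x + (1 - t) *\<^sub>R x')
      \<le> t * f x + (1 - t) * f x' - \<mu> / 2 * t * (1 - t) * (norm (x - x'))\<^sup>2"
    using assms unfolding strongly_convex_def by blast
  have "f (midpoint x y) \<le> f x / 2 + f y / 2 - \<mu> / 8 * (dist x y)\<^sup>2" for x y
    using sc[of "1/2" x y] by (simp add: midpoint_def scaleR_add_right dist_norm add_divide_distrib)
  with \<open>\<mu> > 0\<close> show thesis using that by blast
qed

lemma strongly_convex_bdd_below:
  fixes f :: "'x::real_normed_vector \<Rightarrow> real"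
  assumes "strongly_convex f" "lower_semicontinuous f"
  shows "bdd_below (range f)"
proof -
  obtain \<mu> where "\<mu> > 0" and sc: "\<And>x x' t. 0 \<le> t \<and> t \<le> 1 \<Longrightarrow> f (t *\<^sub>R x + (1 - t) *\<^sub>R x')
      \<le> t * f x + (1 - t) * f x' - \<mu> / 2 * t * (1 - t) * (norm (x - x'))\<^sup>2"
    using assms(1) unfolding strongly_convex_def by blast
  have "open {x. f 0 - 1 < f x}" using assms(2) unfolding lower_semicontinuous_def by blast
  then obtain r where "r > 0" and "ball 0 r \<subseteq> {x. f 0 - 1 < f x}"
    by (rule openE) auto
  then have r: "f 0 - 1 < f y" if "norm y < r" for y
    using that by (auto simp: subset_iff)
  have "f 0 - 1 - 4 / (\<mu> * r\<^sup>2) \<le> f x" for x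
  proof (cases "norm x < r")
    case True
    moreover have "0 \<le> 4 / (\<mu> * r\<^sup>2)" using \<open>\<mu> > 0\<close> by simp
    ultimately show ?thesis using r[of x] by linarith
  next
    case False
    define s t where "s = norm x" and "t = r / (2 * s)"
    have "s \<ge> r" using False by (simp add: s_def)
    have "0 < t" "t \<le> 1/2" "t * s = r / 2"
      using \<open>s \<ge> r\<close> \<open>r > 0\<close> by (auto simp: t_def)
    have "f 0 - 1 < f (t *\<^sub>R x + (1 - t) *\<^sub>R 0)"
      using \<open>0 < t\<close> \<open>t * s = r / 2\<close> \<open>r > 0\<close> by (intro r) (simp add: s_def)
    also have "\<dots> \<le> t * f x + (1 - t) * f 0 - \<mu> / 2 * t * (1 - t) * s\<^sup>2"
      using sc[of t x 0] \<open>0 < t\<close> \<open>t \<le> 1/2\<close> by (simp add: s_def)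
    also have "\<dots> \<le> t * f x + (1 - t) * f 0 - \<mu> / 4 * t * s\<^sup>2"
    proof -
      have "\<mu> / 4 * t \<le> \<mu> / 2 * t * (1 - t)"
        using \<open>0 < t\<close> \<open>t \<le> 1/2\<close> \<open>\<mu> > 0\<close> by (simp add: field_simps)
      then have "\<mu> / 4 * t * s\<^sup>2 \<le> \<mu> / 2 * t * (1 - t) * s\<^sup>2" by (rule mult_right_mono) simp
      then show ?thesis by linarith
    qed
    finally have "t * (f 0 - 1 / t + \<mu> / 4 * s\<^sup>2) < t * f x"
      using \<open>0 < t\<close> by (simp add: algebra_simps)
    then have "f 0 - 1 / t + \<mu> / 4 * s\<^sup>2 < f x"
      using \<open>0 < t\<close> mult_less_cancel_left_pos by blast
    moreover have "1 / t = 2 * s / r" by (simp add: t_def)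
    ultimately have "f 0 - 2 * s / r + \<mu> / 4 * s\<^sup>2 < f x" by simp
    \<comment> \<open>\<open>\<mu>/4 s\<^sup>2 - 2 s / r\<close> is minimal at \<open>s = 4 / (\<mu> r)\<close>\<close>
    moreover have "- 4 / (\<mu> * r\<^sup>2) \<le> \<mu> / 4 * s\<^sup>2 - 2 * s / r"
    proof -
      have "0 \<le> \<mu> / 4 * (s - 4 / (\<mu> * r))\<^sup>2" using \<open>\<mu> > 0\<close> by simp
      also have "\<dots> = \<mu> / 4 * s\<^sup>2 - 2 * s / r + 4 / (\<mu> * r\<^sup>2)"
        using \<open>\<mu> > 0\<close> \<open>r > 0\<close> by (simp add: power2_eq_square field_simps)
      finally show ?thesis by simp
    qed
    ultimately show ?thesis by simp
  qed
  then show ?thesis by (intro bdd_belowI2) blast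
qed

section \<open>Strongly convex minimization under a convex violation constraint\<close>

locale strongly_convex_program =
  fixes f G :: "'x::banach \<Rightarrow> real"
  assumes f_strongly_convex: "strongly_convex f"
    and f_lsc: "lower_semicontinuous f"
    and G_convex: "convex_on UNIV G"
    and G_lsc: "lower_semicontinuous G"
    and G_nonneg: "\<And>x. 0 \<le> G x"
    and feasible_point: "\<exists>x. G x = 0"
begin

definition is_minimizer :: "'x \<Rightarrow> bool" where
  "is_minimizer x \<longleftrightarrow> G x = 0 \<and> (\<forall>y. G y = 0 \<longrightarrow> f x \<le> f y)"

definition relaxed_value :: "real \<Rightarrow> real" where
  "relaxed_value t = Inf (f ` {x. G x \<le> t})"

definition asymptotic_value :: real where
  "asymptotic_value = (SUP t\<in>{0<..}. relaxed_value t)"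

definition asymptotically_minimizing :: "(nat \<Rightarrow> 'x) \<Rightarrow> bool" where
  "asymptotically_minimizing z \<longleftrightarrow> (\<lambda>k. G (z k)) \<longlonglongrightarrow> 0 \<and>
     (\<forall>\<delta>>0. eventually (\<lambda>k. f (z k) \<le> asymptotic_value + \<delta>) sequentially)"

lemma G_midpoint: "G (midpoint x y) \<le> G x / 2 + G y / 2"
proof -
  have "midpoint x y = (1 - 1/2) *\<^sub>R x + (1/2) *\<^sub>R y"
    by (simp add: midpoint_def scaleR_add_right)
  then show ?thesis
    using convex_onD[OF G_convex, of "1/2" x y] by (simp add: add_divide_distrib)
qed

lemma f_bdd_below: "bdd_below (range f)"
  using f_strongly_convex f_lsc by (rule strongly_convex_bdd_below)

lemma relaxed_feasible_nonempty:
  assumes "0 \<le> t"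
  shows "f ` {x. G x \<le> t} \<noteq> {}"
proof -
  obtain x where "G x = 0" using feasible_point ..
  with assms have "f x \<in> f ` {x. G x \<le> t}" by simp
  then show ?thesis by blast
qed

lemma relaxed_value_le:
  assumes "G x \<le> t"
  shows "relaxed_value t \<le> f x"
proof -
  have "bdd_below (f ` {x. G x \<le> t})"
    using f_bdd_below by (rule bdd_below_mono) auto
  then show ?thesis unfolding relaxed_value_def using assms by (auto intro: cInf_lower)
qed

lemma relaxed_value_antimono:
  assumes "0 \<le> s" "s \<le> t"
  shows "relaxed_value t \<le> relaxed_value s"
  unfolding relaxed_value_def
proof (rule cInf_superset_mono)
  show "f ` {x. G x \<le> s} \<noteq> {}" using assms(1) by (rule relaxed_feasible_nonempty)
  show "bdd_below (f ` {x. G x \<le> t})"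
    using f_bdd_below by (rule bdd_below_mono) auto
  show "f ` {x. G x \<le> s} \<subseteq> f ` {x. G x \<le> t}" using assms(2) by auto
qed

lemma bdd_above_relaxed_value: "bdd_above (relaxed_value ` {0<..})"
  by (rule bdd_aboveI2[of _ _ "relaxed_value 0"]) (simp add: relaxed_value_antimono)

lemma relaxed_value_le_asymptotic_value: "0 < t \<Longrightarrow> relaxed_value t \<le> asymptotic_value"
  unfolding asymptotic_value_def by (rule cSUP_upper) (simp_all add: bdd_above_relaxed_value)

lemma asymptotic_value_le:
  assumes "G x = 0"
  shows "asymptotic_value \<le> f x"
  unfolding asymptotic_value_def
  by (rule cSUP_least) (auto simp: assms intro: relaxed_value_le)

lemma asymptotic_value_less_relaxed_value:
  assumes "\<delta> > 0"
  obtains t where "0 < t" "asymptotic_value - \<delta> < relaxed_value t"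
proof -
  have "asymptotic_value - \<delta> < (SUP t\<in>{0<..}. relaxed_value t)"
    using assms by (simp add: asymptotic_value_def)
  then show thesis
    using that by (subst (asm) less_cSUP_iff) (auto simp: bdd_above_relaxed_value)
qed

lemma asymptotically_minimizing_Cauchy:
  assumes "asymptotically_minimizing z"
  shows "Cauchy z"
proof (rule metric_CauchyI)
  fix r :: real assume "r > 0"
  obtain \<mu> where "\<mu> > 0"
    and f_mid: "\<And>x y. f (midpoint x y) \<le> f x / 2 + f y / 2 - \<mu> / 8 * (dist x y)\<^sup>2"
    using strongly_convex_midpoint[OF f_strongly_convex] by blast
  define \<delta> where "\<delta> = \<mu> * r\<^sup>2 / 32"
  have "\<delta> > 0" using \<open>\<mu> > 0\<close> \<open>r > 0\<close> by (simp add: \<delta>_def)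
  obtain t where "0 < t" and t: "asymptotic_value - \<delta> < relaxed_value t"
    using asymptotic_value_less_relaxed_value[OF \<open>\<delta> > 0\<close>] .
  have "eventually (\<lambda>k. G (z k) < t \<and> f (z k) \<le> asymptotic_value + \<delta>) sequentially"
    using assms \<open>0 < t\<close> \<open>\<delta> > 0\<close> unfolding asymptotically_minimizing_def
    by (auto intro: eventually_conj order_tendstoD(2))
  then obtain N where N: "\<And>k. k \<ge> N \<Longrightarrow> G (z k) < t \<and> f (z k) \<le> asymptotic_value + \<delta>"
    unfolding eventually_sequentially by blast
  have "dist (z m) (z n) < r" if "m \<ge> N" "n \<ge> N" for m n
  proof -
    have "G (z m) < t" "G (z n) < t" "f (z m) \<le> asymptotic_value + \<delta>"
      "f (z n) \<le> asymptotic_value + \<delta>"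
      using N that by auto
    then have "G (midpoint (z m) (z n)) < t" using G_midpoint[of "z m" "z n"] by linarith
    then have "asymptotic_value - \<delta> < f (midpoint (z m) (z n))"
      using t relaxed_value_le[of "midpoint (z m) (z n)" t] by linarith
    then have "\<mu> / 8 * (dist (z m) (z n))\<^sup>2 < 2 * \<delta>"
      using f_mid[of "z m" "z n"] \<open>f (z m) \<le> _\<close> \<open>f (z n) \<le> _\<close> by linarith
    then have "2 * (dist (z m) (z n))\<^sup>2 < r\<^sup>2"
      using \<open>\<mu> > 0\<close> by (simp add: \<delta>_def field_simps)
    then have "(dist (z m) (z n))\<^sup>2 < r\<^sup>2" using zero_le_power2[of "dist (z m) (z n)"] by linarith
    then show ?thesis using \<open>r > 0\<close> by (simp add: power_less_imp_less_base)
  qed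
  then show "\<exists>N. \<forall>m\<ge>N. \<forall>n\<ge>N. dist (z m) (z n) < r" by blast
qed

lemma asymptotically_minimizing_limit:
  assumes "asymptotically_minimizing z" "z \<longlonglongrightarrow> x"
  shows "G x = 0" "f x = asymptotic_value"
proof -
  have "G x \<le> 0"
  proof (rule lower_semicontinuous_LIMSEQ_le[OF G_lsc assms(2)])
    have "(\<lambda>k. G (z k)) \<longlonglongrightarrow> 0" using assms(1) by (simp add: asymptotically_minimizing_def)
    show "eventually (\<lambda>k. G (z k) \<le> 0 + \<delta>) sequentially" if "\<delta> > 0" for \<delta>
      using order_tendstoD(2)[OF \<open>(\<lambda>k. G (z k)) \<longlonglongrightarrow> 0\<close> that] by (rule eventually_mono) simp
  qed
  then show "G x = 0" using G_nonneg[of x] by simp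
  have "f x \<le> asymptotic_value"
    using assms(1) unfolding asymptotically_minimizing_def
    by (intro lower_semicontinuous_LIMSEQ_le[OF f_lsc assms(2)]) auto
  with asymptotic_value_le[OF \<open>G x = 0\<close>] show "f x = asymptotic_value" by simp
qed

lemma asymptotically_minimizing_exists: "\<exists>z. asymptotically_minimizing z"
proof -
  have "\<exists>x. G x \<le> 1 / real (Suc k) \<and> f x < relaxed_value (1 / real (Suc k)) + 1 / real (Suc k)" for k
  proof -
    have "f ` {x. G x \<le> 1 / real (Suc k)} \<noteq> {}" by (rule relaxed_feasible_nonempty) simp
    from cInf_lessD[OF this, of "relaxed_value (1 / real (Suc k)) + 1 / real (Suc k)"]
    show ?thesis by (auto simp: relaxed_value_def)
  qed
  then obtain z where z_G: "\<And>k. G (z k) \<le> 1 / real (Suc k)"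
    and z_f: "\<And>k. f (z k) < relaxed_value (1 / real (Suc k)) + 1 / real (Suc k)"
    by metis
  have lim: "(\<lambda>k. 1 / real (Suc k)) \<longlonglongrightarrow> 0" by (rule LIMSEQ_Suc[OF lim_inverse_n'])
  have "(\<lambda>k. G (z k)) \<longlonglongrightarrow> 0"
  proof (rule tendsto_sandwich[OF _ _ tendsto_const lim])
    show "eventually (\<lambda>k. 0 \<le> G (z k)) sequentially" by (simp add: G_nonneg)
    show "eventually (\<lambda>k. G (z k) \<le> 1 / real (Suc k)) sequentially"
      using z_G by (intro always_eventually allI)
  qed
  moreover have "eventually (\<lambda>k. f (z k) \<le> asymptotic_value + \<delta>) sequentially" if "\<delta> > 0" for \<delta>
    using order_tendstoD(2)[OF lim that]
  proof eventually_elim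
    case (elim k)
    then show ?case
      using z_f[of k] relaxed_value_le_asymptotic_value[of "1 / real (Suc k)"] by simp
  qed
  ultimately show ?thesis unfolding asymptotically_minimizing_def by blast
qed

lemma minimizer_unique:
  assumes "is_minimizer a" "is_minimizer b"
  shows "a = b"
proof -
  obtain \<mu> where "\<mu> > 0"
    and f_mid: "\<And>x y. f (midpoint x y) \<le> f x / 2 + f y / 2 - \<mu> / 8 * (dist x y)\<^sup>2"
    using strongly_convex_midpoint[OF f_strongly_convex] by blast
  have "G (midpoint a b) = 0"
    using G_midpoint[of a b] G_nonneg[of "midpoint a b"] assms by (simp add: is_minimizer_def)
  then have "f a \<le> f (midpoint a b)" "f a = f b"
    using assms unfolding is_minimizer_def by (auto intro: order.antisym)
  then have "\<mu> / 8 * (dist a b)\<^sup>2 \<le> 0" using f_mid[of a b] by simp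
  then show "a = b" using \<open>\<mu> > 0\<close> by (simp add: mult_le_0_iff)
qed

lemma minimizer_exists: "\<exists>x. is_minimizer x \<and> f x = asymptotic_value"
proof -
  obtain z where z: "asymptotically_minimizing z" using asymptotically_minimizing_exists ..
  then obtain x where "z \<longlonglongrightarrow> x"
    using asymptotically_minimizing_Cauchy Cauchy_convergent_iff convergent_def by blast
  with z have "G x = 0" "f x = asymptotic_value" by (rule asymptotically_minimizing_limit)+
  then show ?thesis
    using asymptotic_value_le by (auto simp: is_minimizer_def intro!: exI[of _ x])
qed

lemma minimizer_value: "is_minimizer x \<Longrightarrow> f x = asymptotic_value"
  using minimizer_exists minimizer_unique by blast

lemma tendsto_minimizer:
  assumes "is_minimizer x" "(\<lambda>k. G (z k)) \<longlonglongrightarrow> 0"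
    and "\<And>\<delta>. \<delta> > 0 \<Longrightarrow> eventually (\<lambda>k. f (z k) \<le> f x + \<delta>) sequentially"
  shows "z \<longlonglongrightarrow> x"
proof -
  have z: "asymptotically_minimizing z"
    using assms minimizer_value[OF assms(1)] by (simp add: asymptotically_minimizing_def)
  then obtain x' where "z \<longlonglongrightarrow> x'"
    using asymptotically_minimizing_Cauchy Cauchy_convergent_iff convergent_def by blast
  with z have "G x' = 0" "f x' = f x"
    using asymptotically_minimizing_limit minimizer_value[OF assms(1)] by auto
  then have "is_minimizer x'" using assms(1) by (simp add: is_minimizer_def)
  with \<open>z \<longlonglongrightarrow> x'\<close> show ?thesis using minimizer_unique[OF assms(1)] by simp
qed

end

section \<open>Square-integrable functions\<close>

lemma L2_measurable: "u \<in> L2 M \<Longrightarrow> u \<in> borel_measurable M"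
  and L2_integrable_power2: "u \<in> L2 M \<Longrightarrow> integrable M (\<lambda>w. (u w)\<^sup>2)"
  unfolding L2_def by auto

lemma L2norm_nonneg: "0 \<le> L2norm M u"
  unfolding L2norm_def by (intro real_sqrt_ge_zero integral_nonneg_AE) auto

lemma L2norm_power2: "(L2norm M u)\<^sup>2 = integral\<^sup>L M (\<lambda>w. (u w)\<^sup>2)"
  unfolding L2norm_def by (intro real_sqrt_pow2 integral_nonneg_AE) auto

lemma L2_dominated:
  assumes "u \<in> borel_measurable M" "v \<in> L2 M" "AE w in M. \<bar>u w\<bar> \<le> \<bar>v w\<bar>"
  shows "u \<in> L2 M"
proof -
  have "integrable M (\<lambda>w. (u w)\<^sup>2)"
  proof (rule Bochner_Integration.integrable_bound[OF L2_integrable_power2[OF assms(2)]])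
    show "(\<lambda>w. (u w)\<^sup>2) \<in> borel_measurable M" using assms(1) by measurable
    show "AE w in M. norm ((u w)\<^sup>2) \<le> norm ((v w)\<^sup>2)"
      using assms(3) by eventually_elim (simp add: abs_le_square_iff)
  qed
  with assms(1) show ?thesis unfolding L2_def by auto
qed

lemma L2_cmult: "u \<in> L2 M \<Longrightarrow> (\<lambda>w. c * u w) \<in> L2 M"
  unfolding L2_def by (auto simp: power_mult_distrib)

lemma L2_divide: "u \<in> L2 M \<Longrightarrow> (\<lambda>w. u w / c) \<in> L2 M"
  using L2_cmult[of u M "1 / c"] by simp

lemma L2_uminus: "u \<in> L2 M \<Longrightarrow> (\<lambda>w. - u w) \<in> L2 M"
  using L2_cmult[of u M "-1"] by simp

lemma L2_abs: "u \<in> L2 M \<Longrightarrow> (\<lambda>w. \<bar>u w\<bar>) \<in> L2 M"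
  by (rule L2_dominated[of _ _ u]) (auto simp: L2_measurable intro!: borel_measurable_abs)

lemma L2_add:
  assumes "u \<in> L2 M" "v \<in> L2 M"
  shows "(\<lambda>w. u w + v w) \<in> L2 M"
proof -
  have "integrable M (\<lambda>w. (u w + v w)\<^sup>2)"
  proof (rule Bochner_Integration.integrable_bound)
    show "integrable M (\<lambda>w. 2 * (u w)\<^sup>2 + 2 * (v w)\<^sup>2)"
      using assms by (simp add: L2_integrable_power2)
    show "(\<lambda>w. (u w + v w)\<^sup>2) \<in> borel_measurable M"
      using L2_measurable[OF assms(1)] L2_measurable[OF assms(2)] by measurable
    have "(u w + v w)\<^sup>2 \<le> 2 * (u w)\<^sup>2 + 2 * (v w)\<^sup>2" for w
      using zero_le_power2[of "u w - v w"] by (simp add: power2_eq_square algebra_simps)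
    then show "AE w in M. norm ((u w + v w)\<^sup>2) \<le> norm (2 * (u w)\<^sup>2 + 2 * (v w)\<^sup>2)"
      by simp
  qed
  with assms show ?thesis unfolding L2_def by auto
qed

lemma L2_max_0: "u \<in> L2 M \<Longrightarrow> (\<lambda>w. max (u w) 0) \<in> L2 M"
  by (rule L2_dominated[of _ _ u]) (auto simp: L2_measurable intro!: borel_measurable_max)

lemma L2_min:
  assumes "u \<in> L2 M" "v \<in> L2 M"
  shows "(\<lambda>w. min (u w) (v w)) \<in> L2 M"
  by (rule L2_dominated[of _ _ "\<lambda>w. \<bar>u w\<bar> + \<bar>v w\<bar>"])
     (use assms in \<open>auto simp: L2_measurable L2_add L2_abs intro!: borel_measurable_min\<close>)

lemma L2_integrable_mult:
  assumes "u \<in> L2 M" "v \<in> L2 M"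
  shows "integrable M (\<lambda>w. u w * v w)"
proof (rule Bochner_Integration.integrable_bound)
  show "integrable M (\<lambda>w. (u w)\<^sup>2 + (v w)\<^sup>2)" using assms by (simp add: L2_integrable_power2)
  show "(\<lambda>w. u w * v w) \<in> borel_measurable M"
    using assms by (auto simp: L2_measurable intro!: borel_measurable_times)
  have "\<bar>u w * v w\<bar> \<le> (u w)\<^sup>2 + (v w)\<^sup>2" for w
  proof -
    have "2 * \<bar>u w * v w\<bar> \<le> (u w)\<^sup>2 + (v w)\<^sup>2"
      using zero_le_power2[of "\<bar>u w\<bar> - \<bar>v w\<bar>"] by (simp add: power2_eq_square algebra_simps abs_mult)
    then show ?thesis using abs_ge_zero[of "u w * v w"] by linarith
  qed
  then show "AE w in M. norm (u w * v w) \<le> norm ((u w)\<^sup>2 + (v w)\<^sup>2)" by simp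
qed

lemma L2norm_mono:
  assumes "u \<in> L2 M" "v \<in> L2 M" "AE w in M. \<bar>u w\<bar> \<le> \<bar>v w\<bar>"
  shows "L2norm M u \<le> L2norm M v"
proof -
  have "integral\<^sup>L M (\<lambda>w. (u w)\<^sup>2) \<le> integral\<^sup>L M (\<lambda>w. (v w)\<^sup>2)"
    using assms by (intro integral_mono_AE L2_integrable_power2) (auto simp: abs_le_square_iff)
  then show ?thesis unfolding L2norm_def by simp
qed

lemma L2norm_eq_0_iff:
  assumes "u \<in> L2 M"
  shows "L2norm M u = 0 \<longleftrightarrow> (AE w in M. u w = 0)"
proof -
  have "L2norm M u = 0 \<longleftrightarrow> integral\<^sup>L M (\<lambda>w. (u w)\<^sup>2) = 0" unfolding L2norm_def by simp
  also have "\<dots> \<longleftrightarrow> (AE w in M. (u w)\<^sup>2 = 0)"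
    using assms by (intro integral_nonneg_eq_0_iff_AE L2_integrable_power2) auto
  finally show ?thesis by simp
qed

lemma L2norm_cmult: "L2norm M (\<lambda>w. c * u w) = \<bar>c\<bar> * L2norm M u"
  by (simp add: L2norm_def power_mult_distrib real_sqrt_mult)

lemma L2_Cauchy_Schwarz:
  assumes "u \<in> L2 M" "v \<in> L2 M"
  shows "integral\<^sup>L M (\<lambda>w. u w * v w) \<le> L2norm M u * L2norm M v"
proof (cases "L2norm M u = 0 \<or> L2norm M v = 0")
  case True
  then have "AE w in M. u w * v w = 0"
    using assms by (auto simp: L2norm_eq_0_iff)
  then show ?thesis by (simp add: integral_eq_zero_AE L2norm_nonneg)
next
  case False
  define A B where "A = L2norm M u" and "B = L2norm M v"
  have "A > 0" "B > 0" using False L2norm_nonneg[of M] by (auto simp: A_def B_def order_le_less)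
  have int: "integrable M (\<lambda>w. (u w)\<^sup>2)" "integrable M (\<lambda>w. (v w)\<^sup>2)"
    "integrable M (\<lambda>w. u w * v w)"
    using assms by (auto simp: L2_integrable_power2 L2_integrable_mult)
  have "0 \<le> integral\<^sup>L M (\<lambda>w. (u w)\<^sup>2 / A\<^sup>2 - 2 * (u w * v w) / (A * B) + (v w)\<^sup>2 / B\<^sup>2)"
  proof (rule integral_nonneg_AE, rule AE_I2)
    fix w
    have "(u w)\<^sup>2 / A\<^sup>2 - 2 * (u w * v w) / (A * B) + (v w)\<^sup>2 / B\<^sup>2 = (u w / A - v w / B)\<^sup>2"
      using \<open>A > 0\<close> \<open>B > 0\<close> by (simp add: power2_eq_square field_simps)
    then show "0 \<le> (u w)\<^sup>2 / A\<^sup>2 - 2 * (u w * v w) / (A * B) + (v w)\<^sup>2 / B\<^sup>2" by simp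
  qed
  also have "\<dots> = A\<^sup>2 / A\<^sup>2 - 2 * integral\<^sup>L M (\<lambda>w. u w * v w) / (A * B) + B\<^sup>2 / B\<^sup>2"
    using int by (simp add: A_def B_def L2norm_power2)
  also have "\<dots> = 2 - 2 * integral\<^sup>L M (\<lambda>w. u w * v w) / (A * B)"
    using \<open>A > 0\<close> \<open>B > 0\<close> by simp
  finally show ?thesis
    using \<open>A > 0\<close> \<open>B > 0\<close> by (simp add: A_def B_def field_simps)
qed

lemma L2norm_triangle:
  assumes "u \<in> L2 M" "v \<in> L2 M"
  shows "L2norm M (\<lambda>w. u w + v w) \<le> L2norm M u + L2norm M v"
proof (rule power2_le_imp_le)
  have "(L2norm M (\<lambda>w. u w + v w))\<^sup>2
      = (L2norm M u)\<^sup>2 + 2 * integral\<^sup>L M (\<lambda>w. u w * v w) + (L2norm M v)\<^sup>2"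
  proof -
    have "(\<lambda>w. (u w + v w)\<^sup>2) = (\<lambda>w. (u w)\<^sup>2 + 2 * (u w * v w) + (v w)\<^sup>2)"
      by (simp add: fun_eq_iff power2_eq_square algebra_simps)
    then show ?thesis
      using assms unfolding L2norm_power2 by (simp add: L2_integrable_power2 L2_integrable_mult)
  qed
  also have "\<dots> \<le> (L2norm M u + L2norm M v)\<^sup>2"
    using L2_Cauchy_Schwarz[OF assms] by (simp add: power2_eq_square algebra_simps)
  finally show "(L2norm M (\<lambda>w. u w + v w))\<^sup>2 \<le> (L2norm M u + L2norm M v)\<^sup>2" .
  show "0 \<le> L2norm M u + L2norm M v" by (simp add: L2norm_nonneg)
qed

section \<open>The positive part of the constraint and the shifted penalty\<close>

lemma dense_L2_embeddingD:
  assumes "dense_L2_embedding M e"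
  shows "e y \<in> L2 M"
    and "AE w in M. e (a *\<^sub>R y + b *\<^sub>R y') w = a * e y w + b * e y' w"
  using assms unfolding dense_L2_embedding_def by auto

lemma gplus_L2: "e (g x) \<in> L2 M \<Longrightarrow> gplus e g x \<in> L2 M"
  unfolding gplus_def by (rule L2_max_0)

lemma feasible_iff_L2norm_gplus_eq_0:
  assumes "e (g x) \<in> L2 M"
  shows "feasible M e g x \<longleftrightarrow> L2norm M (gplus e g x) = 0"
proof -
  have "L2norm M (gplus e g x) = 0 \<longleftrightarrow> (AE w in M. gplus e g x w = 0)"
    using assms by (intro L2norm_eq_0_iff gplus_L2)
  also have "\<dots> \<longleftrightarrow> (AE w in M. e (g x) w \<le> 0)"
    unfolding gplus_def by (intro AE_cong) (simp add: max_def)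
  finally show ?thesis unfolding feasible_def by simp
qed

lemma order_convexD:
  assumes "order_convex M e g"
    and linear: "\<And>a b y y'. AE w in M. e (a *\<^sub>R y + b *\<^sub>R y') w = a * e y w + b * e y' w"
    and "0 \<le> t" "t \<le> 1"
  shows "AE w in M. e (g (t *\<^sub>R x + (1 - t) *\<^sub>R x')) w \<le> t * e (g x) w + (1 - t) * e (g x') w"
proof -
  let ?c = "t *\<^sub>R x + (1 - t) *\<^sub>R x'" and ?s = "t *\<^sub>R g x + (1 - t) *\<^sub>R g x'"
  have "AE w in M. e (g ?c - ?s) w \<le> 0"
    using assms(1,3,4) unfolding order_convex_def by blast
  moreover have "AE w in M. e (g ?c - ?s) w = e (g ?c) w - e ?s w"
    using linear[of 1 "g ?c" "-1" ?s]
    by (simp only: scaleR_one scaleR_minus1_left mult_1 mult_minus1 add_uminus_conv_diff)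
  moreover have "AE w in M. e ?s w = t * e (g x) w + (1 - t) * e (g x') w"
    by (rule linear)
  ultimately show ?thesis by eventually_elim linarith
qed

lemma convex_on_L2norm_gplus:
  assumes "order_convex M e g" "\<And>x. e (g x) \<in> L2 M"
    and linear: "\<And>a b y y'. AE w in M. e (a *\<^sub>R y + b *\<^sub>R y') w = a * e y w + b * e y' w"
  shows "convex_on UNIV (\<lambda>x. L2norm M (gplus e g x))"
proof (rule convex_onI)
  fix t :: real and x y assume "0 < t" "t < 1"
  let ?u = "\<lambda>w. (1 - t) * gplus e g x w" and ?v = "\<lambda>w. t * gplus e g y w"
  have L2: "?u \<in> L2 M" "?v \<in> L2 M" "gplus e g ((1 - t) *\<^sub>R x + t *\<^sub>R y) \<in> L2 M"
    using assms(2) by (auto intro: L2_cmult gplus_L2)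
  have "AE w in M. e (g ((1 - t) *\<^sub>R x + t *\<^sub>R y)) w \<le> (1 - t) * e (g x) w + t * e (g y) w"
    using order_convexD[OF assms(1) linear, where t="1 - t" and x=x and x'=y] \<open>0 < t\<close> \<open>t < 1\<close>
    by simp
  then have "AE w in M. \<bar>gplus e g ((1 - t) *\<^sub>R x + t *\<^sub>R y) w\<bar> \<le> \<bar>?u w + ?v w\<bar>"
  proof eventually_elim
    case (elim w)
    have "(1 - t) * e (g x) w \<le> (1 - t) * max (e (g x) w) 0" "0 \<le> (1 - t) * max (e (g x) w) 0"
      "t * e (g y) w \<le> t * max (e (g y) w) 0" "0 \<le> t * max (e (g y) w) 0"
      using \<open>0 < t\<close> \<open>t < 1\<close> by (auto intro: mult_left_mono)
    then have "max (e (g ((1 - t) *\<^sub>R x + t *\<^sub>R y)) w) 0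
        \<le> (1 - t) * max (e (g x) w) 0 + t * max (e (g y) w) 0"
      unfolding max.bounded_iff using elim by (intro conjI) linarith+
    then show ?case using \<open>0 < t\<close> \<open>t < 1\<close> by (simp add: gplus_def)
  qed
  then have "L2norm M (gplus e g ((1 - t) *\<^sub>R x + t *\<^sub>R y)) \<le> L2norm M (\<lambda>w. ?u w + ?v w)"
    using L2 by (intro L2norm_mono L2_add)
  also have "\<dots> \<le> L2norm M ?u + L2norm M ?v"
    using L2(1,2) by (rule L2norm_triangle)
  also have "\<dots> = (1 - t) * L2norm M (gplus e g x) + t * L2norm M (gplus e g y)"
    using \<open>0 < t\<close> \<open>t < 1\<close> by (simp add: L2norm_cmult)
  finally show "L2norm M (gplus e g ((1 - t) *\<^sub>R x + t *\<^sub>R y))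
      \<le> (1 - t) * L2norm M (gplus e g x) + t * L2norm M (gplus e g y)" .
qed simp

lemma strongly_convex_program_L2norm_gplus:
  fixes f :: "'x::banach \<Rightarrow> real"
  assumes emb: "dense_L2_embedding M e" and "weakly_lsc f"
    and "weakly_lsc (\<lambda>x. L2norm M (gplus e g x))" and "order_convex M e g"
    and "strongly_convex f" and "\<exists>x. feasible M e g x"
  shows "strongly_convex_program f (\<lambda>x. L2norm M (gplus e g x))"
proof
  have e_L2: "\<And>y. e y \<in> L2 M" using emb by (rule dense_L2_embeddingD)
  show "lower_semicontinuous f" using assms(2) by (rule weakly_lsc_imp_lower_semicontinuous)
  show "lower_semicontinuous (\<lambda>x. L2norm M (gplus e g x))"
    using assms(3) by (rule weakly_lsc_imp_lower_semicontinuous)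
  show "convex_on UNIV (\<lambda>x. L2norm M (gplus e g x))"
    using assms(4) e_L2 dense_L2_embeddingD(2)[OF emb] by (rule convex_on_L2norm_gplus)
  show "\<exists>x. L2norm M (gplus e g x) = 0"
    using assms(6) e_L2 by (simp add: feasible_iff_L2norm_gplus_eq_0)
qed (use assms(5) in \<open>simp_all add: L2norm_nonneg\<close>)

definition shifted_violation ::
    "'w measure \<Rightarrow> ('y \<Rightarrow> 'w \<Rightarrow> real) \<Rightarrow> ('x \<Rightarrow> 'y) \<Rightarrow> real \<Rightarrow> ('w \<Rightarrow> real) \<Rightarrow> 'x \<Rightarrow> real" where
  "shifted_violation M e g \<rho> w x = L2norm M (\<lambda>s. max (e (g x) s + w s / \<rho>) 0)"

lemma aug_lagr_eq_shifted_violation: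
  "aug_lagr M e f g \<rho> x w = f x + \<rho> / 2 * (shifted_violation M e g \<rho> w x)\<^sup>2"
  by (simp add: aug_lagr_def shifted_violation_def)

context
  fixes M :: "'w measure" and e :: "'y \<Rightarrow> 'w \<Rightarrow> real" and g :: "'x \<Rightarrow> 'y"
    and w :: "'w \<Rightarrow> real" and \<rho> :: real
  assumes e_L2: "\<And>y. e y \<in> L2 M" and w_L2: "w \<in> L2 M"
    and w_nonneg: "AE s in M. 0 \<le> w s" and rho_pos: "\<rho> > 0"
begin

lemma shifted_L2: "(\<lambda>s. max (e (g x) s + w s / \<rho>) 0) \<in> L2 M"
  by (intro L2_max_0 L2_add L2_divide e_L2 w_L2)

lemma compl_L2: "(\<lambda>s. min (- e (g x) s) (w s / \<rho>)) \<in> L2 M"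
  by (intro L2_min L2_uminus L2_divide e_L2 w_L2)

lemma L2norm_gplus_le_shifted_violation:
  "L2norm M (gplus e g x) \<le> shifted_violation M e g \<rho> w x"
  unfolding shifted_violation_def
proof (rule L2norm_mono[OF gplus_L2[OF e_L2] shifted_L2])
  show "AE s in M. \<bar>gplus e g x s\<bar> \<le> \<bar>max (e (g x) s + w s / \<rho>) 0\<bar>"
    using w_nonneg
  proof eventually_elim
    case (elim s)
    then have "0 \<le> w s / \<rho>" using rho_pos by simp
    then show ?case by (auto simp: gplus_def max_def)
  qed
qed

lemma L2norm_gplus_le_compl_res: "L2norm M (gplus e g x) \<le> compl_res M e g x w \<rho>"
  unfolding compl_res_def
proof (rule L2norm_mono[OF gplus_L2[OF e_L2] compl_L2])
  show "AE s in M. \<bar>gplus e g x s\<bar> \<le> \<bar>min (- e (g x) s) (w s / \<rho>)\<bar>"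
    using w_nonneg by eventually_elim (use rho_pos in \<open>auto simp: gplus_def min_def max_def\<close>)
qed

context
  fixes xb :: 'x
  assumes xb_feasible: "feasible M e g xb"
begin

lemma feasible_shifted_le: "AE s in M. \<bar>max (e (g xb) s + w s / \<rho>) 0\<bar> \<le> \<bar>w s / \<rho>\<bar>"
  using xb_feasible w_nonneg unfolding feasible_def
  by eventually_elim (use rho_pos in \<open>auto simp: max_def\<close>)

lemma shifted_violation_feasible_le: "shifted_violation M e g \<rho> w xb \<le> L2norm M w / \<rho>"
proof -
  have "shifted_violation M e g \<rho> w xb \<le> L2norm M (\<lambda>s. (1 / \<rho>) * w s)"
    unfolding shifted_violation_def using feasible_shifted_le
    by (intro L2norm_mono shifted_L2 L2_cmult w_L2) simp
  also have "\<dots> = L2norm M w / \<rho>" using rho_pos L2norm_cmult[of M "1 / \<rho>" w] by simp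
  finally show ?thesis .
qed

lemma shifted_violation_feasible_le_add:
  "shifted_violation M e g \<rho> w xb \<le> shifted_violation M e g \<rho> w x + compl_res M e g x w \<rho>"
proof -
  have split: "w s / \<rho> = max (e (g x) s + w s / \<rho>) 0 + min (- e (g x) s) (w s / \<rho>)" for s
    by (simp add: max_def min_def)
  have "shifted_violation M e g \<rho> w xb
      \<le> L2norm M (\<lambda>s. max (e (g x) s + w s / \<rho>) 0 + min (- e (g x) s) (w s / \<rho>))"
    unfolding shifted_violation_def using feasible_shifted_le
    by (intro L2norm_mono shifted_L2 L2_add compl_L2) (simp flip: split)
  also have "\<dots> \<le> shifted_violation M e g \<rho> w x + compl_res M e g x w \<rho>"
    unfolding shifted_violation_def compl_res_def by (intro L2norm_triangle shifted_L2 compl_L2)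
  finally show ?thesis .
qed

end

end

section \<open>The augmented Lagrangian iteration\<close>

lemma filterlim_at_top_if_frequently_scaled:
  fixes \<rho> :: "nat \<Rightarrow> real"
  assumes "incseq \<rho>" "\<rho> 0 > 0" "\<gamma> > 1" and scaled: "\<And>K. \<exists>k\<ge>K. \<rho> (Suc k) = \<gamma> * \<rho> k"
  shows "filterlim \<rho> at_top sequentially"
  unfolding filterlim_at_top eventually_sequentially
proof
  have grow: "\<exists>K. \<gamma> ^ N * \<rho> 0 \<le> \<rho> K" for N
  proof (induction N)
    case (Suc N)
    then obtain K where "\<gamma> ^ N * \<rho> 0 \<le> \<rho> K" by blast
    moreover obtain k where "k \<ge> K" "\<rho> (Suc k) = \<gamma> * \<rho> k" using scaled by blast
    moreover have "\<rho> K \<le> \<rho> k" using \<open>incseq \<rho>\<close> \<open>k \<ge> K\<close> by (simp add: incseqD)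
    ultimately have "\<gamma> ^ Suc N * \<rho> 0 \<le> \<rho> (Suc k)"
      using \<open>\<gamma> > 1\<close> by (simp add: mult.assoc)
    then show ?case by blast
  qed (intro exI[of _ 0], simp)
  fix Z :: real
  obtain N where "Z / \<rho> 0 < \<gamma> ^ N" using real_arch_pow[OF \<open>\<gamma> > 1\<close>] by blast
  then have "Z \<le> \<gamma> ^ N * \<rho> 0" using \<open>\<rho> 0 > 0\<close> by (simp add: divide_less_eq less_imp_le)
  moreover obtain K where "\<gamma> ^ N * \<rho> 0 \<le> \<rho> K" using grow by blast
  ultimately have "\<forall>k\<ge>K. Z \<le> \<rho> k"
    using \<open>incseq \<rho>\<close> by (meson incseqD order_trans)
  then show "\<exists>K. \<forall>k\<ge>K. Z \<le> \<rho> k" by blast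
qed

lemma eventually_const_or_filterlim_at_top:
  fixes \<rho> :: "nat \<Rightarrow> real"
  assumes "\<rho> 0 > 0" "\<gamma> > 1" and step: "\<And>k. \<rho> (Suc k) = \<rho> k \<or> \<rho> (Suc k) = \<gamma> * \<rho> k"
  shows "(\<exists>K. \<forall>k\<ge>K. \<rho> (Suc k) = \<rho> k) \<or> filterlim \<rho> at_top sequentially"
proof (cases "\<exists>K. \<forall>k\<ge>K. \<rho> (Suc k) = \<rho> k")
  case False
  then have scaled: "\<exists>k\<ge>K. \<rho> (Suc k) = \<gamma> * \<rho> k" for K using step by metis
  have pos: "\<rho> k > 0" for k
  proof (induction k)
    case (Suc k)
    then show ?case using step[of k] \<open>\<gamma> > 1\<close> by auto
  qed (use assms in simp)
  have "\<rho> k \<le> \<rho> (Suc k)" for k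
    using step[of k] pos[of k] \<open>\<gamma> > 1\<close> by auto
  then have "incseq \<rho>" by (rule incseq_SucI)
  then show ?thesis
    using filterlim_at_top_if_frequently_scaled assms(1,2) scaled by blast
qed simp

lemma eventually_le_add_tendsto_0:
  fixes a u :: "nat \<Rightarrow> real"
  assumes "eventually (\<lambda>k. a k \<le> c + u k) sequentially" "u \<longlonglongrightarrow> 0" "\<delta> > 0"
  shows "eventually (\<lambda>k. a k \<le> c + \<delta>) sequentially"
  using assms(1) order_tendstoD(2)[OF assms(2,3)] by eventually_elim simp

locale aug_lagr_iteration =
  fixes M :: "'w measure" and e :: "'y \<Rightarrow> 'w \<Rightarrow> real" and f :: "'x \<Rightarrow> real" and g :: "'x \<Rightarrow> 'y"
    and x :: "nat \<Rightarrow> 'x" and wk :: "nat \<Rightarrow> 'w \<Rightarrow> real" and \<rho> :: "nat \<Rightarrow> real"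
    and wmax :: "'w \<Rightarrow> real" and \<gamma> \<tau> :: real and \<epsilon> :: "nat \<Rightarrow> real"
  assumes e_L2: "\<And>y. e y \<in> L2 M"
    and rho0: "\<rho> 0 > 0"
    and wmax_L2: "wmax \<in> L2 M"
    and gamma: "\<gamma> > 1"
    and tau: "\<tau> < 1"
    and wk_L2: "\<And>k. wk k \<in> L2 M"
    and wk_bounds: "\<And>k. AE s in M. 0 \<le> wk k s \<and> wk k s \<le> wmax s"
    and eps: "\<epsilon> \<longlonglongrightarrow> 0"
    and approx_min: "\<And>k y. aug_lagr M e f g (\<rho> k) (x (Suc k)) (wk k)
                               \<le> aug_lagr M e f g (\<rho> k) y (wk k) + \<epsilon> k"
    and rho_upd: "\<And>k. \<rho> (Suc k) =
       (if k = 0 \<or> compl_res M e g (x (Suc k)) (wk k) (\<rho> k)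
                     \<le> \<tau> * compl_res M e g (x k) (wk (k - 1)) (\<rho> (k - 1))
        then \<rho> k else \<gamma> * \<rho> k)"
begin

abbreviation violation :: "nat \<Rightarrow> real" where
  "violation k \<equiv> L2norm M (gplus e g (x (Suc k)))"

abbreviation residual :: "nat \<Rightarrow> real" where
  "residual k \<equiv> compl_res M e g (x (Suc k)) (wk k) (\<rho> k)"

abbreviation shifted :: "'x \<Rightarrow> nat \<Rightarrow> real" where
  "shifted y k \<equiv> shifted_violation M e g (\<rho> k) (wk k) y"

lemma rho_pos: "\<rho> k > 0"
  by (induction k) (use rho0 rho_upd gamma in auto)

lemma wk_nonneg: "AE s in M. 0 \<le> wk k s"
  using wk_bounds[of k] by eventually_elim simp

lemma L2norm_wk_le: "L2norm M (wk k) \<le> L2norm M wmax"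
  using wk_bounds[of k] by (intro L2norm_mono wk_L2 wmax_L2) auto

lemma violation_le_shifted: "violation k \<le> shifted (x (Suc k)) k"
  using e_L2 wk_L2 wk_nonneg rho_pos by (rule L2norm_gplus_le_shifted_violation)

lemma violation_le_residual: "violation k \<le> residual k"
  using e_L2 wk_L2 wk_nonneg rho_pos by (rule L2norm_gplus_le_compl_res)

lemma rho_dichotomy: "(\<exists>K. \<forall>k\<ge>K. \<rho> (Suc k) = \<rho> k) \<or> filterlim \<rho> at_top sequentially"
proof -
  have "\<rho> (Suc k) = \<rho> k \<or> \<rho> (Suc k) = \<gamma> * \<rho> k" for k using rho_upd[of k] by simp
  then show ?thesis using eventually_const_or_filterlim_at_top[of \<rho> \<gamma>] rho0 gamma by blast
qed

context
  fixes xb :: 'x and m :: real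
  assumes xb_feasible: "feasible M e g xb" and f_lower: "\<And>y. m \<le> f y"
begin

lemma aug_lagr_iterate_le:
  "f (x (Suc k)) + \<rho> k / 2 * (shifted (x (Suc k)) k)\<^sup>2 \<le> f xb + \<rho> k / 2 * (shifted xb k)\<^sup>2 + \<epsilon> k"
  using approx_min[of k xb] by (simp add: aug_lagr_eq_shifted_violation)

lemma shifted_xb_le: "\<rho> k / 2 * (shifted xb k)\<^sup>2 \<le> (L2norm M wmax)\<^sup>2 / (2 * \<rho> k)"
proof -
  have "shifted xb k \<le> L2norm M (wk k) / \<rho> k"
    using e_L2 wk_L2 wk_nonneg rho_pos xb_feasible by (rule shifted_violation_feasible_le)
  also have "\<dots> \<le> L2norm M wmax / \<rho> k"
    using L2norm_wk_le[of k] rho_pos[of k] by (simp add: divide_right_mono)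
  finally have "shifted xb k \<le> L2norm M wmax / \<rho> k" .
  then have "(shifted xb k)\<^sup>2 \<le> (L2norm M wmax / \<rho> k)\<^sup>2"
    by (simp add: power_mono L2norm_nonneg shifted_violation_def)
  then have "\<rho> k / 2 * (shifted xb k)\<^sup>2 \<le> \<rho> k / 2 * (L2norm M wmax / \<rho> k)\<^sup>2"
    using rho_pos[of k] by (simp add: mult_left_mono)
  also have "\<dots> = (L2norm M wmax)\<^sup>2 / (2 * \<rho> k)"
    using rho_pos[of k] by (simp add: power2_eq_square)
  finally show ?thesis .
qed

lemma shifted_penalty_le:
  "\<rho> k / 2 * (shifted (x (Suc k)) k)\<^sup>2 \<le> f xb - m + (L2norm M wmax)\<^sup>2 / (2 * \<rho> k) + \<epsilon> k"
  using aug_lagr_iterate_le[of k] shifted_xb_le[of k] f_lower[of "x (Suc k)"] by linarith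

lemma tendsto_of_rho_unbounded:
  assumes "filterlim \<rho> at_top sequentially"
  shows "violation \<longlonglongrightarrow> 0"
    and "\<delta> > 0 \<Longrightarrow> eventually (\<lambda>k. f (x (Suc k)) \<le> f xb + \<delta>) sequentially"
proof -
  define u where "u k = (L2norm M wmax)\<^sup>2 / (2 * \<rho> k) + \<epsilon> k" for k
  have inv: "(\<lambda>k. c / \<rho> k) \<longlonglongrightarrow> 0" for c
    by (rule tendsto_divide_0[OF tendsto_const filterlim_at_top_imp_at_infinity[OF assms]])
  have "(\<lambda>k. (L2norm M wmax)\<^sup>2 / 2 / \<rho> k + \<epsilon> k) \<longlonglongrightarrow> 0 + 0"
    by (intro tendsto_add inv eps)
  then have u: "u \<longlonglongrightarrow> 0" by (simp add: u_def[abs_def])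
  have "(\<lambda>k. 2 / \<rho> k * (f xb - m + u k)) \<longlonglongrightarrow> 0 * (f xb - m + 0)"
    by (intro tendsto_mult inv tendsto_add tendsto_const u)
  then have lim: "(\<lambda>k. sqrt (2 / \<rho> k * (f xb - m + u k))) \<longlonglongrightarrow> 0"
    using tendsto_real_sqrt by force
  have bound: "violation k \<le> sqrt (2 / \<rho> k * (f xb - m + u k))" for k
  proof (rule real_le_rsqrt)
    have "(violation k)\<^sup>2 \<le> (shifted (x (Suc k)) k)\<^sup>2"
      using violation_le_shifted[of k] by (simp add: power_mono L2norm_nonneg)
    also have "\<dots> = 2 / \<rho> k * (\<rho> k / 2 * (shifted (x (Suc k)) k)\<^sup>2)"
      using rho_pos[of k] by simp
    also have "\<dots> \<le> 2 / \<rho> k * (f xb - m + u k)"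
      using shifted_penalty_le[of k] rho_pos[of k] by (intro mult_left_mono) (simp_all add: u_def)
    finally show "(violation k)\<^sup>2 \<le> 2 / \<rho> k * (f xb - m + u k)" .
  qed
  show "violation \<longlonglongrightarrow> 0"
  proof (rule tendsto_sandwich[OF _ _ tendsto_const lim])
    show "eventually (\<lambda>k. 0 \<le> violation k) sequentially" by (simp add: L2norm_nonneg)
    show "eventually (\<lambda>k. violation k \<le> sqrt (2 / \<rho> k * (f xb - m + u k))) sequentially"
      using bound by simp
  qed
  have "f (x (Suc k)) \<le> f xb + u k" for k
  proof -
    have "0 \<le> \<rho> k / 2 * (shifted (x (Suc k)) k)\<^sup>2" using rho_pos[of k] by simp
    then show ?thesis using aug_lagr_iterate_le[of k] shifted_xb_le[of k] unfolding u_def by linarith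
  qed
  then show "\<delta> > 0 \<Longrightarrow> eventually (\<lambda>k. f (x (Suc k)) \<le> f xb + \<delta>) sequentially"
    using eventually_le_add_tendsto_0[OF _ u] by simp
qed

lemma residual_tendsto_0_of_rho_eventually_const:
  assumes "\<And>k. k \<ge> K \<Longrightarrow> \<rho> (Suc k) = \<rho> k"
  shows "residual \<longlonglongrightarrow> 0"
proof -
  have "residual (Suc k) \<le> \<tau> * residual k" if "k \<ge> K" for k
  proof -
    have "\<rho> (Suc (Suc k)) = \<rho> (Suc k)" using assms that by simp
    moreover have "\<rho> (Suc k) \<noteq> \<gamma> * \<rho> (Suc k)" using gamma rho_pos[of "Suc k"] by simp
    ultimately show ?thesis using rho_upd[of "Suc k"] by (auto split: if_splits)
  qed
  then have "summable residual"
    by (intro summable_ratio_test[OF tau, of K]) (simp add: compl_res_def L2norm_nonneg)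
  then show ?thesis by (rule summable_LIMSEQ_zero)
qed

lemma objective_le_of_rho_eq:
  assumes "\<rho> k = R" "\<epsilon> k \<le> 1"
  defines "S \<equiv> sqrt (2 / R * (f xb - m + (L2norm M wmax)\<^sup>2 / (2 * R) + 1))"
  shows "f (x (Suc k)) \<le> f xb + (R * S * residual k + R / 2 * (residual k)\<^sup>2 + \<epsilon> k)"
proof -
  let ?s = "shifted (x (Suc k)) k" and ?sb = "shifted xb k" and ?r = "residual k"
  have "R > 0" using rho_pos[of k] assms(1) by simp
  have "?s \<le> S" unfolding S_def
  proof (rule real_le_rsqrt)
    have "?s\<^sup>2 = 2 / R * (R / 2 * ?s\<^sup>2)" using \<open>R > 0\<close> by simp
    also have "\<dots> \<le> 2 / R * (f xb - m + (L2norm M wmax)\<^sup>2 / (2 * R) + 1)"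
      using shifted_penalty_le[of k] assms \<open>R > 0\<close> by (intro mult_left_mono) simp_all
    finally show "?s\<^sup>2 \<le> 2 / R * (f xb - m + (L2norm M wmax)\<^sup>2 / (2 * R) + 1)" .
  qed
  have "?r \<ge> 0" by (simp add: compl_res_def L2norm_nonneg)
  have "?sb \<le> ?s + ?r"
    using e_L2 wk_L2 wk_nonneg rho_pos xb_feasible by (rule shifted_violation_feasible_le_add)
  then have "?sb\<^sup>2 \<le> (?s + ?r)\<^sup>2" by (simp add: power_mono shifted_violation_def L2norm_nonneg)
  also have "\<dots> = ?s\<^sup>2 + 2 * ?s * ?r + ?r\<^sup>2" by (simp add: power2_eq_square algebra_simps)
  also have "\<dots> \<le> ?s\<^sup>2 + 2 * S * ?r + ?r\<^sup>2"
    using \<open>?s \<le> S\<close> \<open>?r \<ge> 0\<close> by (simp add: mult_right_mono)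
  finally have "R / 2 * ?sb\<^sup>2 \<le> R / 2 * (?s\<^sup>2 + 2 * S * ?r + ?r\<^sup>2)"
    using \<open>R > 0\<close> by (intro mult_left_mono) simp_all
  also have "\<dots> = R / 2 * ?s\<^sup>2 + (R * S * ?r + R / 2 * ?r\<^sup>2)" by (simp add: algebra_simps)
  finally show ?thesis using aug_lagr_iterate_le[of k] unfolding assms(1) by linarith
qed

lemma tendsto_of_rho_eventually_const:
  assumes "\<And>k. k \<ge> K \<Longrightarrow> \<rho> (Suc k) = \<rho> k"
  shows "violation \<longlonglongrightarrow> 0"
    and "\<delta> > 0 \<Longrightarrow> eventually (\<lambda>k. f (x (Suc k)) \<le> f xb + \<delta>) sequentially"
proof -
  have res: "residual \<longlonglongrightarrow> 0" using assms by (rule residual_tendsto_0_of_rho_eventually_const)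
  show "violation \<longlonglongrightarrow> 0"
  proof (rule tendsto_sandwich[OF _ _ tendsto_const res])
    show "eventually (\<lambda>k. 0 \<le> violation k) sequentially" by (simp add: L2norm_nonneg)
    show "eventually (\<lambda>k. violation k \<le> residual k) sequentially"
      by (simp add: violation_le_residual)
  qed
  define R where "R = \<rho> K"
  have rho_eq: "\<rho> k = R" if "k \<ge> K" for k
    using that by (induction rule: dec_induct) (simp_all add: R_def assms)
  define S where "S = sqrt (2 / R * (f xb - m + (L2norm M wmax)\<^sup>2 / (2 * R) + 1))"
  define u where "u k = R * S * residual k + R / 2 * (residual k)\<^sup>2 + \<epsilon> k" for k
  have "(\<lambda>k. R * S * residual k + R / 2 * (residual k)\<^sup>2 + \<epsilon> k) \<longlonglongrightarrow> R * S * 0 + R / 2 * 0\<^sup>2 + 0"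
    by (intro tendsto_intros res eps)
  then have u: "u \<longlonglongrightarrow> 0" by (simp add: u_def[abs_def])
  have "eventually (\<lambda>k. \<epsilon> k < 1) sequentially" using order_tendstoD(2)[OF eps] by simp
  moreover have "eventually (\<lambda>k. k \<ge> K) sequentially" by (rule eventually_ge_at_top)
  ultimately have "eventually (\<lambda>k. f (x (Suc k)) \<le> f xb + u k) sequentially"
  proof eventually_elim
    case (elim k)
    then show ?case using objective_le_of_rho_eq[of k R] rho_eq[of k] by (simp add: u_def S_def)
  qed
  then show "\<delta> > 0 \<Longrightarrow> eventually (\<lambda>k. f (x (Suc k)) \<le> f xb + \<delta>) sequentially"
    using eventually_le_add_tendsto_0[OF _ u] by simp
qed

lemma iterates_asymptotically_optimal:
  shows "violation \<longlonglongrightarrow> 0"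
    and "\<delta> > 0 \<Longrightarrow> eventually (\<lambda>k. f (x (Suc k)) \<le> f xb + \<delta>) sequentially"
  using rho_dichotomy tendsto_of_rho_eventually_const tendsto_of_rho_unbounded by blast+

end

end

theorem theorem4p3:
  fixes M :: "'w measure"
    and e :: "'y::banach \<Rightarrow> 'w \<Rightarrow> real"
    and f :: "'x::banach \<Rightarrow> real"
    and g :: "'x \<Rightarrow> 'y"
    and x :: "nat \<Rightarrow> 'x"
    and lam :: "nat \<Rightarrow> 'w \<Rightarrow> real"
    and wk :: "nat \<Rightarrow> 'w \<Rightarrow> real"
    and \<rho> :: "nat \<Rightarrow> real"
    and wmax :: "'w \<Rightarrow> real"
    and \<gamma> \<tau> :: real
    and \<epsilon> :: "nat \<Rightarrow> real"
  assumes refl: "reflexive_space TYPE('x)"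
    and emb: "dense_L2_embedding M e"
    and f_wlsc: "weakly_lsc f"
    and gp_wlsc: "weakly_lsc (\<lambda>x. L2norm M (gplus e g x))"
    and g_conv: "order_convex M e g"
    and f_sconv: "strongly_convex f"
    and feas: "\<exists>x. feasible M e g x"
    and lam0: "lam 0 \<in> L2 M"
    and rho0: "\<rho> 0 > 0"
    and wmax: "wmax \<in> L2 M" "AE s in M. 0 \<le> wmax s"
    and gamma: "\<gamma> > 1"
    and tau: "0 < \<tau>" "\<tau> < 1"
    and wk: "\<And>k. wk k \<in> L2 M" "\<And>k. AE s in M. 0 \<le> wk k s \<and> wk k s \<le> wmax s"
    and eps: "decseq \<epsilon>" "\<epsilon> \<longlonglongrightarrow> 0"
    and approx_min: "\<And>k y. aug_lagr M e f g (\<rho> k) (x (Suc k)) (wk k)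
                               \<le> aug_lagr M e f g (\<rho> k) y (wk k) + \<epsilon> k"
    and lam_upd: "\<And>k. lam (Suc k) = (\<lambda>s. max (wk k s + \<rho> k * e (g (x (Suc k))) s) 0)"
    and rho_upd: "\<And>k. \<rho> (Suc k) =
       (if k = 0 \<or> compl_res M e g (x (Suc k)) (wk k) (\<rho> k)
                     \<le> \<tau> * compl_res M e g (x k) (wk (k - 1)) (\<rho> (k - 1))
        then \<rho> k else \<gamma> * \<rho> k)"
  shows "\<exists>xb. (\<forall>x'. is_solution M e f g x' \<longleftrightarrow> x' = xb) \<and> x \<longlonglongrightarrow> xb"
proof -
  have e_L2: "\<And>y. e y \<in> L2 M" using emb by (rule dense_L2_embeddingD)
  interpret program: strongly_convex_program f "\<lambda>x. L2norm M (gplus e g x)"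
    using emb f_wlsc gp_wlsc g_conv f_sconv feas by (rule strongly_convex_program_L2norm_gplus)
  interpret run: aug_lagr_iteration M e f g x wk \<rho> wmax \<gamma> \<tau> \<epsilon>
    using e_L2 rho0 wmax(1) gamma tau(2) wk eps(2) approx_min rho_upd by unfold_locales
  have solution_iff: "is_solution M e f g x' \<longleftrightarrow> program.is_minimizer x'" for x'
    using e_L2 by (simp add: is_solution_def program.is_minimizer_def feasible_iff_L2norm_gplus_eq_0)
  obtain xb where xb: "program.is_minimizer xb" using program.minimizer_exists by blast
  then have "feasible M e g xb" by (simp add: solution_iff[symmetric] is_solution_def)
  obtain m where m: "\<And>y. m \<le> f y"
    using program.f_bdd_below unfolding bdd_below_def by blast
  have "(\<lambda>k. x (Suc k)) \<longlonglongrightarrow> xb"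
    using run.iterates_asymptotically_optimal[OF \<open>feasible M e g xb\<close> m]
    by (rule program.tendsto_minimizer[OF xb])
  then have "x \<longlonglongrightarrow> xb" by (rule LIMSEQ_imp_Suc)
  then show ?thesis using solution_iff program.minimizer_unique[OF xb] xb by blast
qed

end
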